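(* Let $s\in(0,1]$ and $1<p<\infty$. There is a constant $C$ depending only on $N,p,s$ such that for every measurable $f$ on $\mathbb R^N$ with $\Phi^s(f)\in L^p(\mathbb R^N)$, $$\Big\|\log\Big(1+\frac{|f(x)-f(y)|}{|x-y|^s}\Big)\frac{1}{|x-y|^{N/p}}\Big\|_{L(p,\infty)(\mathbb R^N\times\mathbb R^N)}\le C\,\|\Phi^s(f)\|_{L^p(\mathbb R^N)}.$$
   Context: $\Phi^s(f)(x)=\sup_{r>0}\frac{1}{\mathcal L^N(B(x,r))}\int_{B(x,r)}\log\Big(\frac{|f(x)-f(y)|}{r^s}+1\Big)\,dy$; the space $\mathcal N^{s,p}(\mathbb R^N)$ has seminorm $\|\Phi^s(f)\|_{L^p(\mathbb R^N)}$. For measurable $F$ on $(Y,\nu)$, $\|F\|_{L(p,\infty)(Y,\nu)}=\sup_{\lambda>0}\lambda\,\nu(\{|F|>\lambda\})^{1/p}$; $\mathbb R^N\times\mathbb R^N$ carries Lebesgue measure. *)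

theory Defs
  imports "HOL-Analysis.Analysis"
begin

definition epowr :: "ennreal \<Rightarrow> real \<Rightarrow> ennreal" where
  "epowr x a = (if x = top then top else ennreal (enn2real x powr a))"

definition Phi :: "real \<Rightarrow> ('a::euclidean_space \<Rightarrow> real) \<Rightarrow> 'a \<Rightarrow> ennreal" where
  "Phi s f x = (SUP r\<in>{0<..}.
      (\<integral>\<^sup>+ y. indicator (ball x r) y * ennreal (ln (\<bar>f x - f y\<bar> / r powr s + 1)) \<partial>lebesgue)
        / emeasure lebesgue (ball x r))"

definition Lp_norm :: "'a measure \<Rightarrow> real \<Rightarrow> ('a \<Rightarrow> ennreal) \<Rightarrow> ennreal" where
  "Lp_norm M p g = epowr (\<integral>\<^sup>+ x. epowr (g x) p \<partial>M) (1 / p)"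

definition weak_Lp_norm :: "'a measure \<Rightarrow> real \<Rightarrow> ('a \<Rightarrow> real) \<Rightarrow> ennreal" where
  "weak_Lp_norm M p F = (SUP l\<in>{0<..}.
      ennreal l * epowr (emeasure M {z \<in> space M. \<bar>F z\<bar> > l}) (1 / p))"

end

theory Submission
  imports Defs
begin

text \<open>
  Fix \<open>x \<noteq> y\<close> and \<open>r = |x - y|\<close>. Since \<open>t \<mapsto> log (1 + t)\<close> is subadditive and
  \<open>B(x,r) \<subseteq> B(y,2r)\<close>, averaging \<open>log (1 + |f x - f y| / r^s)\<close> over \<open>z \<in> B(x,r)\<close> bounds it
  by \<open>\<Phi>(x) + 2^(N+1) \<Phi>(y)\<close>. So wherever the quotient by \<open>|x - y|^(N/p)\<close> exceeds \<open>\<lambda>\<close>,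
  one of \<open>\<Phi>(x), \<Phi>(y)\<close> exceeds \<open>c \<lambda> |x - y|^(N/p)\<close>. By Fubini the set of such pairs has
  measure \<open>\<le> C \<lambda>^(-p) \<parallel>\<Phi>\<parallel>\<^sub>p^p\<close>, because its sections are balls of volume
  \<open>\<omega>\<^sub>N (\<Phi>(x) / (c \<lambda>))^p\<close>.
\<close>

lemma ln_one_plus_le_add:
  fixes u v w :: real
  assumes "0 \<le> u" "0 \<le> v" "0 \<le> w" "w \<le> u + v"
  shows "ln (1 + w) \<le> ln (1 + u) + ln (1 + v)"
proof -
  have "w \<le> u + v + u * v"
    using assms mult_nonneg_nonneg[of u v] by linarith
  then have "ln (1 + w) \<le> ln ((1 + u) * (1 + v))"
    using assms by (intro ln_mono) (auto simp: algebra_simps)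
  also have "\<dots> = ln (1 + u) + ln (1 + v)"
    using assms by (simp add: ln_mult)
  finally show ?thesis .
qed

lemma powr_double_le:
  fixes r s :: real
  assumes "0 < r" "s \<le> 1"
  shows "(2 * r) powr s \<le> 2 * r powr s"
proof -
  have "2 powr s \<le> 2 powr (1::real)"
    using assms by (intro powr_mono) auto
  then show ?thesis
    using assms by (simp add: powr_mult mult_right_mono)
qed

lemma ln_quotient_split:
  fixes a b c r s :: real
  assumes "0 < r" "s \<le> 1"
  shows "ln (1 + \<bar>a - b\<bar> / r powr s)
    \<le> ln (\<bar>a - c\<bar> / r powr s + 1) + 2 * ln (\<bar>b - c\<bar> / (2 * r) powr s + 1)"
proof -
  define u v t where "u = \<bar>a - c\<bar> / r powr s" and "v = \<bar>b - c\<bar> / r powr s"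
    and "t = \<bar>b - c\<bar> / (2 * r) powr s"
  have rs: "0 < r powr s" "0 < (2 * r) powr s"
    using assms by auto
  have "\<bar>a - b\<bar> / r powr s \<le> u + v"
    using rs by (simp add: u_def v_def add_divide_distrib[symmetric] divide_right_mono)
  then have "ln (1 + \<bar>a - b\<bar> / r powr s) \<le> ln (1 + u) + ln (1 + v)"
    using rs by (intro ln_one_plus_le_add) (auto simp: u_def v_def)
  moreover have "v \<le> t + t"
  proof -
    have "v \<le> \<bar>b - c\<bar> / ((2 * r) powr s / 2)"
      unfolding v_def using rs powr_double_le[OF assms] by (intro divide_left_mono) auto
    then show ?thesis
      by (simp add: t_def mult.commute)
  qed
  then have "ln (1 + v) \<le> ln (1 + t) + ln (1 + t)"
    using rs by (intro ln_one_plus_le_add) (auto simp: t_def v_def)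
  ultimately show ?thesis
    by (simp add: u_def t_def add.commute)
qed

lemma completion_borel_majorant:
  fixes g :: "'a \<Rightarrow> ennreal"
  assumes "g \<in> borel_measurable (completion M)"
  obtains h where "h \<in> borel_measurable M" "\<And>x. g x \<le> h x" "AE x in M. g x = h x"
proof -
  obtain g' where g': "g' \<in> borel_measurable M" "AE x in M. g x = g' x"
    using completion_ex_borel_measurable[OF assms] by blast
  then obtain N where N: "{x \<in> space M. g x \<noteq> g' x} \<subseteq> N" "N \<in> null_sets M"
    unfolding eventually_ae_filter by blast
  define h where "h x = (if x \<in> N \<union> - space M then top else g' x)" for x
  have "h \<in> borel_measurable M"
    unfolding h_def using g'(1) N(2) by (intro measurable_If_set) (auto simp: null_sets_def)
  moreover have "g x \<le> h x" for x
    using N(1) by (auto simp: h_def)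
  moreover have "AE x in M. g x = h x"
    using g'(2) AE_not_in[OF N(2)] AE_space by eventually_elim (auto simp: h_def)
  ultimately show thesis
    using that by blast
qed

lemma weak_Lp_norm_le_of_distribution_le:
  fixes F :: "'a \<Rightarrow> real" and K :: real and I :: ennreal
  assumes p: "0 < p" and K: "0 \<le> K" and I: "I \<noteq> top"
    and distribution_le: "\<And>l. 0 < l \<Longrightarrow> emeasure M {z \<in> space M. \<bar>F z\<bar> > l} \<le> ennreal (K / l powr p) * I"
  shows "weak_Lp_norm M p F \<le> ennreal (K powr (1 / p)) * epowr I (1 / p)"
  unfolding weak_Lp_norm_def
proof (rule SUP_least)
  fix l :: real
  assume "l \<in> {0<..}"
  then have l: "0 < l" by simp
  define S where "S = emeasure M {z \<in> space M. \<bar>F z\<bar> > l}"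
  obtain i where i: "I = ennreal i" "0 \<le> i"
    using I by (cases I) auto
  have "S \<le> ennreal (K / l powr p * i)"
    using distribution_le[OF l] i K by (simp add: S_def ennreal_mult del: times_divide_eq_left)
  then obtain \<sigma> where \<sigma>: "S = ennreal \<sigma>" "0 \<le> \<sigma>" "\<sigma> \<le> K / l powr p * i"
    using i K by (cases S) (auto simp: ennreal_le_iff top_unique)
  have "l * \<sigma> powr (1 / p) \<le> l * (K / l powr p * i) powr (1 / p)"
    using \<sigma> l p by (intro mult_left_mono powr_mono2) auto
  also have "\<dots> = K powr (1 / p) * i powr (1 / p)"
    using l p K i by (simp add: powr_mult powr_divide powr_powr)
  finally show "ennreal l * epowr S (1 / p) \<le> ennreal (K powr (1 / p)) * epowr I (1 / p)"
    using \<sigma> i l by (simp add: epowr_def ennreal_mult[symmetric] ennreal_leI)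
qed

lemma emeasure_sublevel_norm_powr:
  fixes x :: "'a::euclidean_space" and v :: ennreal
  assumes a: "0 < a" and p: "0 < p"
  shows "emeasure lborel {y. ennreal (a * norm (x - y) powr (DIM('a) / p)) < v}
    = ennreal (unit_ball_vol DIM('a) / a powr p) * epowr v p"
proof (cases v)
  case top
  then show ?thesis
    using a by (simp add: epowr_def ennreal_mult_top less_imp_neq[OF unit_ball_vol_pos, symmetric])
next
  case (real t)
  define q where "q = DIM('a) / p"
  have q: "0 < q"
    using p by (simp add: q_def)
  show ?thesis
  proof (cases "t = 0")
    case True
    then show ?thesis
      using real p by (simp add: epowr_def)
  next
    case False
    then have t: "0 < t"
      using real by simp
    define R where "R = (t / a) powr (1 / q)"
    have R: "0 < R" "R powr q = t / a"
      using q t a by (simp_all add: R_def powr_powr)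
    have sublevel_iff: "a * norm (x - y) powr q < t \<longleftrightarrow> norm (x - y) < R" for y
    proof -
      have "a * norm (x - y) powr q < t \<longleftrightarrow> norm (x - y) powr q < R powr q"
        using a R by (simp add: pos_less_divide_eq mult.commute)
      also have "\<dots> \<longleftrightarrow> norm (x - y) < R"
      proof
        assume "norm (x - y) powr q < R powr q"
        then show "norm (x - y) < R"
          using powr_mono2[of q R "norm (x - y)"] q R by (meson less_imp_le not_less)
      qed (use q in \<open>simp add: powr_less_mono2\<close>)
      finally show ?thesis .
    qed
    have "ennreal (a * norm (x - y) powr q) < v \<longleftrightarrow> y \<in> ball x R" for y
      using sublevel_iff[of y] real a by (simp add: dist_norm ennreal_less_iff)
    then have "{y. ennreal (a * norm (x - y) powr q) < v} = ball x R"
      by blast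
    moreover have "R ^ DIM('a) = t powr p / a powr p"
      using R p t a by (simp add: powr_realpow[symmetric] R_def powr_powr q_def powr_divide)
    ultimately show ?thesis
      using real t R(1) emeasure_ball[where c = x and r = R]
      by (simp add: q_def epowr_def ennreal_mult[symmetric] del: emeasure_ball)
  qed
qed

lemma emeasure_pairs_below:
  fixes h :: "'a::euclidean_space \<Rightarrow> ennreal"
  assumes [measurable]: "h \<in> borel_measurable borel" and a: "0 < a" and p: "0 < p"
  defines "A \<equiv> {z::'a \<times> 'a. ennreal (a * norm (fst z - snd z) powr (DIM('a) / p)) < h (fst z)}"
    and "B \<equiv> {z::'a \<times> 'a. ennreal (a * norm (fst z - snd z) powr (DIM('a) / p)) < h (snd z)}"
    and "c \<equiv> ennreal (unit_ball_vol DIM('a) / a powr p) * (\<integral>\<^sup>+ x. epowr (h x) p \<partial>lborel)"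
  shows "A \<in> sets lborel" "B \<in> sets lborel" "emeasure lborel A = c" "emeasure lborel B = c"
proof -
  have [measurable]: "(\<lambda>x. epowr (h x) p) \<in> borel_measurable borel"
    unfolding epowr_def by measurable
  have int_eq: "(\<integral>\<^sup>+ x. emeasure lborel {y. ennreal (a * norm (x - y) powr (DIM('a) / p)) < h x} \<partial>lborel) = c"
    by (simp add: c_def emeasure_sublevel_norm_powr[OF a p] nn_integral_cmult)
  have "{z \<in> space (lborel \<Otimes>\<^sub>M lborel). ennreal (a * norm (fst z - snd z) powr (DIM('a) / p)) < h (fst z)}
      \<in> sets (lborel \<Otimes>\<^sub>M lborel)"
    by measurable
  then have "A \<in> sets (lborel \<Otimes>\<^sub>M lborel)"
    by (simp add: A_def space_pair_measure)
  then show "A \<in> sets lborel" "emeasure lborel A = c"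
    by (simp_all add: lborel_prod[symmetric] lborel.emeasure_pair_measure_alt vimage_def A_def int_eq)
  have "{z \<in> space (lborel \<Otimes>\<^sub>M lborel). ennreal (a * norm (fst z - snd z) powr (DIM('a) / p)) < h (snd z)}
      \<in> sets (lborel \<Otimes>\<^sub>M lborel)"
    by measurable
  then have "B \<in> sets (lborel \<Otimes>\<^sub>M lborel)"
    by (simp add: B_def space_pair_measure)
  then show "B \<in> sets lborel" "emeasure lborel B = c"
    by (simp_all add: lborel_prod[symmetric] lborel_pair.emeasure_pair_measure_alt2 vimage_def B_def
        norm_minus_commute int_eq)
qed

lemma ball_subset_ball_double:
  fixes x y :: "'a::metric_space"
  assumes "dist y x \<le> r"
  shows "ball x r \<subseteq> ball y (2 * r)"
proof
  fix z assume "z \<in> ball x r"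
  then show "z \<in> ball y (2 * r)"
    using dist_triangle[of y z x] assms by simp
qed

lemma emeasure_ball_double:
  fixes x y :: "'a::euclidean_space"
  assumes "0 \<le> r"
  shows "emeasure lborel (ball y (2 * r)) = 2 ^ DIM('a) * emeasure lborel (ball x r)"
  using assms by (simp add: emeasure_ball power_mult_distrib ennreal_mult ennreal_power[symmetric]
      mult.left_commute)

lemma ball_integral_le_Phi:
  fixes f :: "'a::euclidean_space \<Rightarrow> real"
  assumes "0 < r"
  shows "(\<integral>\<^sup>+ y. indicator (ball x r) y * ennreal (ln (\<bar>f x - f y\<bar> / r powr s + 1)) \<partial>lebesgue)
    \<le> Phi s f x * emeasure lebesgue (ball x r)"
proof -
  let ?I = "\<integral>\<^sup>+ y. indicator (ball x r) y * ennreal (ln (\<bar>f x - f y\<bar> / r powr s + 1)) \<partial>lebesgue"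
  let ?m = "emeasure lebesgue (ball x r)"
  have m: "?m \<noteq> 0" "?m \<noteq> top"
    using assms by (simp_all add: emeasure_ball less_imp_neq[OF unit_ball_vol_pos, symmetric])
  have "?I / ?m \<le> Phi s f x"
    unfolding Phi_def using assms by (intro SUP_upper2[of r]) auto
  then have "?I / ?m * ?m \<le> Phi s f x * ?m"
    by (rule mult_right_mono) simp
  then show ?thesis
    using m by (simp add: ennreal_divide_times ennreal_divide_self less_top)
qed

lemma ln_diff_quotient_le_Phi:
  fixes f :: "'a::euclidean_space \<Rightarrow> real"
  assumes f: "f \<in> borel_measurable lebesgue" and s: "s \<le> 1" and "x \<noteq> y"
  shows "ennreal (ln (1 + \<bar>f x - f y\<bar> / norm (x - y) powr s))
    \<le> Phi s f x + 2 ^ (DIM('a) + 1) * Phi s f y"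
proof -
  define r where "r = norm (x - y)"
  have r: "0 < r"
    using \<open>x \<noteq> y\<close> by (simp add: r_def)
  define L where "L = ln (1 + \<bar>f x - f y\<bar> / r powr s)"
  define a where "a z = indicator (ball x r) z * ennreal (ln (\<bar>f x - f z\<bar> / r powr s + 1))" for z
  define b where "b z = indicator (ball y (2 * r)) z * ennreal (ln (\<bar>f y - f z\<bar> / (2 * r) powr s + 1))"
    for z
  define m where "m = emeasure lebesgue (ball x r)"
  have m: "m \<noteq> 0" "m \<noteq> top"
    using r by (simp_all add: m_def emeasure_ball less_imp_neq[OF unit_ball_vol_pos, symmetric])
  have m2: "emeasure lebesgue (ball y (2 * r)) = 2 ^ DIM('a) * m"
    using r by (simp add: m_def emeasure_ball_double)
  have ball_sub: "ball x r \<subseteq> ball y (2 * r)"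
    by (rule ball_subset_ball_double) (simp add: r_def dist_norm norm_minus_commute)
  have split: "indicator (ball x r) z * ennreal L \<le> a z + 2 * b z" for z
  proof (cases "z \<in> ball x r")
    case True
    have "ennreal L \<le> ennreal (ln (\<bar>f x - f z\<bar> / r powr s + 1) + 2 * ln (\<bar>f y - f z\<bar> / (2 * r) powr s + 1))"
      unfolding L_def by (intro ennreal_leI ln_quotient_split r s)
    then show ?thesis
      using True ball_sub by (auto simp: a_def b_def ennreal_plus ennreal_mult)
  qed (simp add: a_def)
  have ln_measurable: "(\<lambda>z. ennreal (ln (\<bar>c - f z\<bar> / d + 1))) \<in> borel_measurable lebesgue" for c d
    using f by measurable
  have [measurable]: "a \<in> borel_measurable lebesgue" "b \<in> borel_measurable lebesgue"
    unfolding a_def b_def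
    by (intro borel_measurable_times_ennreal borel_measurable_indicator ln_measurable, simp)+
  have int_a: "(\<integral>\<^sup>+ z. a z \<partial>lebesgue) \<le> Phi s f x * m"
    unfolding a_def m_def by (rule ball_integral_le_Phi[OF r])
  have int_b: "(\<integral>\<^sup>+ z. b z \<partial>lebesgue) \<le> Phi s f y * (2 ^ DIM('a) * m)"
    unfolding b_def m2[symmetric] using r by (intro ball_integral_le_Phi) simp
  have "ennreal L * m = (\<integral>\<^sup>+ z. indicator (ball x r) z * ennreal L \<partial>lebesgue)"
    by (simp add: m_def nn_integral_cmult_indicator mult.commute)
  also have "\<dots> \<le> (\<integral>\<^sup>+ z. a z + 2 * b z \<partial>lebesgue)"
    by (intro nn_integral_mono split)
  also have "\<dots> = (\<integral>\<^sup>+ z. a z \<partial>lebesgue) + 2 * (\<integral>\<^sup>+ z. b z \<partial>lebesgue)"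
    by (simp add: nn_integral_add nn_integral_cmult)
  also have "\<dots> \<le> Phi s f x * m + 2 * (Phi s f y * (2 ^ DIM('a) * m))"
    using int_a int_b by (intro add_mono mult_left_mono) auto
  also have "\<dots> = (Phi s f x + 2 ^ (DIM('a) + 1) * Phi s f y) * m"
    by (simp add: algebra_simps)
  finally show ?thesis
    using m by (simp add: L_def r_def mult.commute ennreal_mult_le_mult_iff)
qed

lemma Phi_large_of_ln_quotient_large:
  fixes f :: "'a::euclidean_space \<Rightarrow> real"
  assumes f: "f \<in> borel_measurable lebesgue" and s: "s \<le> 1" and "0 \<le> t"
    and large: "t < ln (1 + \<bar>f x - f y\<bar> / norm (x - y) powr s)"
  shows "ennreal (t / (1 + 2 ^ (DIM('a) + 1))) < Phi s f x
    \<or> ennreal (t / (1 + 2 ^ (DIM('a) + 1))) < Phi s f y"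
proof (rule ccontr)
  define c where "c = ennreal (t / (1 + 2 ^ (DIM('a) + 1)))"
  assume "\<not> ?thesis"
  then have Phi_le: "Phi s f x \<le> c" "Phi s f y \<le> c"
    by (simp_all add: c_def not_less)
  have "x \<noteq> y"
    using large \<open>0 \<le> t\<close> by auto
  then have "ennreal (ln (1 + \<bar>f x - f y\<bar> / norm (x - y) powr s))
      \<le> Phi s f x + 2 ^ (DIM('a) + 1) * Phi s f y"
    by (rule ln_diff_quotient_le_Phi[OF f s])
  also have "\<dots> \<le> c + 2 ^ (DIM('a) + 1) * c"
    using Phi_le by (intro add_mono mult_left_mono) auto
  also have "\<dots> = ennreal (1 + 2 ^ (DIM('a) + 1)) * c"
    by (simp add: ennreal_plus ennreal_power[symmetric] algebra_simps del: power_Suc)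
  also have "\<dots> = ennreal t"
    unfolding c_def using \<open>0 \<le> t\<close> by (subst ennreal_mult[symmetric]) (simp_all add: add_nonneg_eq_0_iff)
  finally show False
    using large \<open>0 \<le> t\<close> by (simp add: ennreal_le_iff)
qed

lemma emeasure_log_quotient_superlevel_le:
  fixes f :: "'a::euclidean_space \<Rightarrow> real"
  assumes f: "f \<in> borel_measurable lebesgue" and Phi: "Phi s f \<in> borel_measurable lebesgue"
    and s: "s \<le> 1" and p: "0 < p" and l: "0 < l"
  defines "F \<equiv> \<lambda>(x, y). ln (1 + \<bar>f x - f y\<bar> / norm (x - y) powr s) / norm (x - y) powr (DIM('a) / p)"
  shows "emeasure (lebesgue :: ('a \<times> 'a) measure) {z \<in> space lebesgue. \<bar>F z\<bar> > l}
    \<le> ennreal (2 * unit_ball_vol DIM('a) * (1 + 2 ^ (DIM('a) + 1)) powr p / l powr p)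
      * (\<integral>\<^sup>+ x. epowr (Phi s f x) p \<partial>lebesgue)"
proof -
  obtain h where h: "h \<in> borel_measurable lborel" "\<And>x. Phi s f x \<le> h x"
    "AE x in lborel. Phi s f x = h x"
    using completion_borel_majorant[OF Phi] by blast
  have h_borel: "h \<in> borel_measurable borel"
    using h(1) by simp
  define P :: real where "P = 1 + 2 ^ (DIM('a) + 1)"
  have P: "0 < P"
    by (simp add: P_def add_pos_nonneg)
  define a where "a = l / P"
  have a: "0 < a"
    using l P by (simp add: a_def)
  define A where "A = {z::'a \<times> 'a. ennreal (a * norm (fst z - snd z) powr (DIM('a) / p)) < h (fst z)}"
  define B where "B = {z::'a \<times> 'a. ennreal (a * norm (fst z - snd z) powr (DIM('a) / p)) < h (snd z)}"
  define I where "I = (\<integral>\<^sup>+ x. epowr (Phi s f x) p \<partial>lebesgue)"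
  have "I = (\<integral>\<^sup>+ x. epowr (h x) p \<partial>lborel)"
    unfolding I_def nn_integral_completion using h(3) by (intro nn_integral_cong_AE) auto
  then have AB: "A \<in> sets lborel" "B \<in> sets lborel"
    "emeasure lborel A = ennreal (unit_ball_vol DIM('a) / a powr p) * I"
    "emeasure lborel B = ennreal (unit_ball_vol DIM('a) / a powr p) * I"
    unfolding A_def B_def using emeasure_pairs_below[OF h_borel a p] by simp_all
  have "{z \<in> space lebesgue. \<bar>F z\<bar> > l} \<subseteq> A \<union> B"
  proof
    fix z assume "z \<in> {z \<in> space lebesgue. \<bar>F z\<bar> > l}"
    moreover obtain x y where z: "z = (x, y)"
      by (cases z)
    ultimately have large: "l < \<bar>F (x, y)\<bar>"
      by simp
    define d where "d = norm (x - y) powr (DIM('a) / p)"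
    have "x \<noteq> y"
      using large l by (auto simp: F_def)
    then have d: "0 < d"
      by (simp add: d_def)
    then have "l * d < ln (1 + \<bar>f x - f y\<bar> / norm (x - y) powr s)"
      using large by (simp add: F_def d_def[symmetric] pos_less_divide_eq)
    then have "ennreal (l * d / P) < Phi s f x \<or> ennreal (l * d / P) < Phi s f y"
      unfolding P_def using l d by (intro Phi_large_of_ln_quotient_large[OF f s]) simp
    then show "z \<in> A \<union> B"
      using h(2)[of x] h(2)[of y] by (auto simp: A_def B_def z a_def d_def intro: order.strict_trans2)
  qed
  then have "emeasure lebesgue {z \<in> space lebesgue. \<bar>F z\<bar> > l} \<le> emeasure lebesgue (A \<union> B)"
    using AB by (intro emeasure_mono) auto
  also have "\<dots> = emeasure lborel (A \<union> B)"
    using AB by simp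
  also have "\<dots> \<le> emeasure lborel A + emeasure lborel B"
    using AB by (intro emeasure_subadditive) auto
  also have "\<dots> = ennreal (2 * (unit_ball_vol DIM('a) / a powr p)) * I"
    unfolding AB(3,4) mult_2 by (subst ennreal_plus) (simp_all only: distrib_right, simp_all)
  also have "2 * (unit_ball_vol DIM('a) / a powr p) = 2 * unit_ball_vol DIM('a) * P powr p / l powr p"
    using l P by (simp add: a_def powr_divide)
  finally show ?thesis
    by (simp add: P_def I_def)
qed

theorem mainTheorem14:
  fixes s p :: real
  assumes "0 < s" "s \<le> 1" "1 < p"
  shows "\<exists>C::real. \<forall>f :: 'a::euclidean_space \<Rightarrow> real.
           f \<in> borel_measurable lebesgue \<longrightarrow>
           Phi s f \<in> borel_measurable lebesgue \<longrightarrow>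
           (\<integral>\<^sup>+ x. epowr (Phi s f x) p \<partial>lebesgue) < \<infinity> \<longrightarrow>
           weak_Lp_norm (lebesgue :: ('a \<times> 'a) measure) p
             (\<lambda>(x, y). ln (1 + \<bar>f x - f y\<bar> / norm (x - y) powr s)
                        / norm (x - y) powr (real DIM('a) / p))
           \<le> ennreal C * Lp_norm lebesgue p (Phi s f)"
proof -
  have p: "0 < p"
    using assms(3) by simp
  define K where "K = 2 * unit_ball_vol DIM('a) * (1 + 2 ^ (DIM('a) + 1)) powr p"
  have K: "0 \<le> K"
    by (simp add: K_def)
  show ?thesis
  proof (intro exI[of _ "K powr (1 / p)"] allI impI)
    fix f :: "'a \<Rightarrow> real"
    assume f: "f \<in> borel_measurable lebesgue" and Phi: "Phi s f \<in> borel_measurable lebesgue"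
      and finite: "(\<integral>\<^sup>+ x. epowr (Phi s f x) p \<partial>lebesgue) < \<infinity>"
    show "weak_Lp_norm lebesgue p (\<lambda>(x, y). ln (1 + \<bar>f x - f y\<bar> / norm (x - y) powr s)
        / norm (x - y) powr (real DIM('a) / p)) \<le> ennreal (K powr (1 / p)) * Lp_norm lebesgue p (Phi s f)"
      unfolding Lp_norm_def
    proof (rule weak_Lp_norm_le_of_distribution_le[OF p K])
      show "(\<integral>\<^sup>+ x. epowr (Phi s f x) p \<partial>lebesgue) \<noteq> top"
        using finite by simp
    qed (unfold K_def, rule emeasure_log_quotient_superlevel_le[OF f Phi assms(2) p])
  qed
qed

end
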